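(* There exists a topological dynamical system $(X,T)$ which is a nonminimal E-system, is sensitive but not thickly sensitive, and satisfies $\mathrm{Tran}(X,T)\subsetneq \mathrm{Eq}_{\mathrm{syn}}(X,T)=X$.
   Context: $(X,\varrho)$ compact metric, $T$ continuous surjection. $S_T(U,\delta)=\{n\in\mathbb{N}:\exists x_1,x_2\in U,\ \varrho(T^nx_1,T^nx_2)>\delta\}$, $J_T(U,\delta)=\mathbb N\setminus S_T(U,\delta)$. Sensitive: there is $\delta>0$ with $S_T(U,\delta)$ infinite (equivalently nonempty for all opene $U$); thickly sensitive: there is $\delta>0$ with $S_T(U,\delta)$ thick (containing arbitrarily long blocks of consecutive integers) for all opene $U$. $\mathrm{Eq}_{\mathrm{syn}}(X,T)$: points $x$ such that for every $\varepsilon>0$ some neighborhood $U$ of $x$ has $J_T(U,\varepsilon)$ syndetic (bounded gaps). $\mathrm{Tran}(X,T)$: points with dense orbit. An E-system is a transitive system admitting a $T$-invariant Borel probability measure with full support. *)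

theory Defs
  imports "HOL-Analysis.Analysis" "HOL-Probability.Probability"
begin

definition tds :: "'a::metric_space set \<Rightarrow> ('a \<Rightarrow> 'a) \<Rightarrow> bool" where
  "tds X T \<longleftrightarrow> compact X \<and> X \<noteq> {} \<and> continuous_on X T \<and> T ` X = X"

definition opene :: "'a::metric_space set \<Rightarrow> 'a set \<Rightarrow> bool" where
  "opene X U \<longleftrightarrow> openin (top_of_set X) U \<and> U \<noteq> {}"

text \<open>Here the natural numbers are taken to be the positive integers.\<close>
definition S_T :: "('a::metric_space \<Rightarrow> 'a) \<Rightarrow> 'a set \<Rightarrow> real \<Rightarrow> nat set" where
  "S_T T U \<delta> = {n. n \<ge> 1 \<and> (\<exists>x1\<in>U. \<exists>x2\<in>U. dist ((T ^^ n) x1) ((T ^^ n) x2) > \<delta>)}"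

definition J_T :: "('a::metric_space \<Rightarrow> 'a) \<Rightarrow> 'a set \<Rightarrow> real \<Rightarrow> nat set" where
  "J_T T U \<delta> = {n. n \<ge> 1} - S_T T U \<delta>"

definition thick :: "nat set \<Rightarrow> bool" where
  "thick A \<longleftrightarrow> (\<forall>k. \<exists>m. {m..<m+k} \<subseteq> A)"

definition syndetic :: "nat set \<Rightarrow> bool" where
  "syndetic A \<longleftrightarrow> (\<exists>k. \<forall>m. \<exists>n\<in>A. m \<le> n \<and> n < m + k)"

definition sensitive :: "'a::metric_space set \<Rightarrow> ('a \<Rightarrow> 'a) \<Rightarrow> bool" where
  "sensitive X T \<longleftrightarrow> (\<exists>\<delta>>0. \<forall>U. opene X U \<longrightarrow> infinite (S_T T U \<delta>))"

definition thickly_sensitive :: "'a::metric_space set \<Rightarrow> ('a \<Rightarrow> 'a) \<Rightarrow> bool" where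
  "thickly_sensitive X T \<longleftrightarrow> (\<exists>\<delta>>0. \<forall>U. opene X U \<longrightarrow> thick (S_T T U \<delta>))"

definition Eq_syn :: "'a::metric_space set \<Rightarrow> ('a \<Rightarrow> 'a) \<Rightarrow> 'a set" where
  "Eq_syn X T = {x\<in>X. \<forall>\<epsilon>>0. \<exists>U. openin (top_of_set X) U \<and> x \<in> U \<and> syndetic (J_T T U \<epsilon>)}"

definition orbit :: "('a \<Rightarrow> 'a) \<Rightarrow> 'a \<Rightarrow> 'a set" where
  "orbit T x = {(T ^^ n) x | n. True}"

definition Tran :: "'a::metric_space set \<Rightarrow> ('a \<Rightarrow> 'a) \<Rightarrow> 'a set" where
  "Tran X T = {x\<in>X. closure (orbit T x) = X}"

definition transitive :: "'a::metric_space set \<Rightarrow> ('a \<Rightarrow> 'a) \<Rightarrow> bool" where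
  "transitive X T \<longleftrightarrow> (\<forall>U V. opene X U \<longrightarrow> opene X V \<longrightarrow> (\<exists>n\<ge>1. (T ^^ n) ` U \<inter> V \<noteq> {}))"

definition minimal :: "'a::metric_space set \<Rightarrow> ('a \<Rightarrow> 'a) \<Rightarrow> bool" where
  "minimal X T \<longleftrightarrow> (\<forall>Y. Y \<subseteq> X \<longrightarrow> closed Y \<longrightarrow> Y \<noteq> {} \<longrightarrow> T ` Y \<subseteq> Y \<longrightarrow> Y = X)"

definition has_full_invariant_measure :: "'a::metric_space set \<Rightarrow> ('a \<Rightarrow> 'a) \<Rightarrow> bool" where
  "has_full_invariant_measure X T \<longleftrightarrow>
     (\<exists>M. prob_space M \<and> sets M = sets (restrict_space borel X) \<and> space M = X
        \<and> (\<forall>A\<in>sets M. measure M (T -` A \<inter> X) = measure M A)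
        \<and> (\<forall>U. opene X U \<longrightarrow> emeasure M U > 0))"

definition E_system :: "'a::metric_space set \<Rightarrow> ('a \<Rightarrow> 'a) \<Rightarrow> bool" where
  "E_system X T \<longleftrightarrow> transitive X T \<and> has_full_invariant_measure X T"

end

theory Submission
  imports Defs "HOL-Number_Theory.Cong"
begin

text \<open>The space consists of pairs \<open>(a, x)\<close>: \<open>a\<close> is a point of the odometer-like group
  \<open>\<Prod>\<^sub>k \<int>/q\<^sub>k\<close>, rotated by \<open>1\<close> in every coordinate, where the \<open>q\<^sub>k\<close> are distinct primes with
  \<open>q\<^sub>k \<ge> 4\<^sup>k\<^sup>+\<^sup>1\<close>; \<open>x\<close> is a shifted bit sequence that may carry a \<open>1\<close> at time \<open>n\<close> only if
  \<open>(a\<^sub>k + n) mod q\<^sub>k > k\<close> for every \<open>k\<close>. Fixing \<open>a\<^sub>B\<close> in a neighbourhood, the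
  coordinate \<open>B\<close> returns to \<open>0\<close> along a syndetic set of times, and at those times the next
  \<open>B\<close> bits are forced to vanish; this gives syndetic equicontinuity everywhere and rules out
  thick sensitivity. The forbidden residues in coordinate \<open>k\<close> have density at most
  \<open>(k + 1)/q\<^sub>k\<close>, which is summable, so every finite pattern can be completed (Chinese
  remaindering plus counting); this yields transitivity, sensitivity by flipping a late bit, and
  full support of the image of a uniform product measure. The points without bits form a proper
  closed invariant subsystem, so the system is not minimal and these points are not transitive.\<close>

section \<open>Pairwise coprime moduli\<close>

primrec modulus :: "nat \<Rightarrow> nat" where
  "modulus 0 = (LEAST p. prime p \<and> 4 \<le> p)"
| "modulus (Suc k) = (LEAST p. prime p \<and> modulus k < p \<and> 4 ^ Suc (Suc k) \<le> p)"

lemma exists_prime_greater_ge: "\<exists>p::nat. prime p \<and> m < p \<and> n \<le> p"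
  using bigger_prime[of "max m n"] by auto

lemma modulus_Suc_spec:
  "prime (modulus (Suc k)) \<and> modulus k < modulus (Suc k) \<and> 4 ^ Suc (Suc k) \<le> modulus (Suc k)"
  using LeastI_ex[OF exists_prime_greater_ge[of "modulus k" "4 ^ Suc (Suc k)"]] by simp

lemma prime_modulus: "prime (modulus k)"
  and pow4_le_modulus: "4 ^ Suc k \<le> modulus k"
proof (atomize (full), cases k)
  case 0
  have "\<exists>p::nat. prime p \<and> 4 \<le> p"
    using exists_prime_greater_ge[of 0 4] by blast
  then show "prime (modulus k) \<and> 4 ^ Suc k \<le> modulus k"
    using LeastI_ex 0 by simp
qed (use modulus_Suc_spec in simp)

lemma strict_mono_modulus: "strict_mono modulus"
  unfolding strict_mono_Suc_iff using modulus_Suc_spec by blast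

lemma coprime_modulus: "j \<noteq> k \<Longrightarrow> coprime (modulus j) (modulus k)"
  by (metis prime_modulus primes_coprime strict_mono_eq strict_mono_modulus)

lemma mult_Suc_less_modulus: "c \<le> k \<Longrightarrow> c * Suc k < modulus k"
proof -
  assume "c \<le> k"
  then have "c * Suc k < 2 ^ Suc k * 2 ^ Suc k"
    using less_exp[of "Suc k"] by (intro mult_strict_mono) auto
  also have "\<dots> = 4 ^ Suc k" by (simp flip: power_mult_distrib)
  also have "\<dots> \<le> modulus k" by (rule pow4_le_modulus)
  finally show ?thesis .
qed

lemma Suc_less_modulus: "Suc k < modulus k"
proof -
  have "(2::nat) ^ Suc k \<le> 4 ^ Suc k" by (rule power_mono) auto
  then have "Suc k < 4 ^ Suc k" using less_exp[of "Suc k"] by linarith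
  then show ?thesis using pow4_le_modulus[of k] by linarith
qed

lemma modulus_pos: "0 < modulus k"
  using Suc_less_modulus[of k] by simp

lemma modulus_chinese_remainder: "\<exists>n\<ge>L. \<forall>k<K. n mod modulus k = r k mod modulus k"
proof -
  obtain x where x: "\<forall>k\<in>{..<K}. [x = r k] (mod modulus k)"
    using chinese_remainder_nat[of "{..<K}" modulus r] coprime_modulus by auto
  define P where "P = (\<Prod>k<K. modulus k)"
  have "P > 0" unfolding P_def using modulus_pos by (simp add: prod_pos)
  then have "L \<le> x + L * P" by (simp add: trans_le_add2)
  moreover have "(x + L * P) mod modulus k = r k mod modulus k" if "k < K" for k
  proof -
    have "modulus k dvd P" unfolding P_def using that by (intro dvd_prodI) auto
    then obtain c where "P = c * modulus k" by (metis dvd_def mult.commute)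
    then have "(x + L * P) mod modulus k = x mod modulus k"
      by (metis mod_mult_self1 mult.assoc)
    then show ?thesis using x that by (simp add: cong_def)
  qed
  ultimately show ?thesis by blast
qed

definition rot :: "nat \<Rightarrow> (nat \<Rightarrow> nat) \<Rightarrow> nat \<Rightarrow> nat" where
  "rot n a k = (a k + n) mod modulus k"

definition free_time :: "(nat \<Rightarrow> nat) \<Rightarrow> nat \<Rightarrow> bool" where
  "free_time a n \<longleftrightarrow> (\<forall>k. k < rot n a k)"

definition admissible :: "(nat \<Rightarrow> nat) \<Rightarrow> (nat \<Rightarrow> bool) \<Rightarrow> bool" where
  "admissible a x \<longleftrightarrow> (\<forall>k. a k < modulus k) \<and> (\<forall>n. x n \<longrightarrow> free_time a n)"

lemma rot_less: "rot n a k < modulus k"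
  by (simp add: rot_def modulus_pos)

lemma rot_rot: "rot m (rot n a) = rot (n + m) a"
  by (simp add: rot_def fun_eq_iff mod_add_left_eq add.assoc)

lemma rot_0: "(\<And>k. a k < modulus k) \<Longrightarrow> rot 0 a = a"
  by (simp add: rot_def fun_eq_iff)

lemma free_time_rot: "free_time (rot m a) n \<longleftrightarrow> free_time a (m + n)"
  by (simp add: free_time_def rot_rot)

lemma admissible_less: "admissible a x \<Longrightarrow> a k < modulus k"
  by (simp add: admissible_def)

lemma admissible_free_time: "admissible a x \<Longrightarrow> x n \<Longrightarrow> free_time a n"
  by (simp add: admissible_def)

lemma admissible_rot: "admissible a x \<Longrightarrow> admissible (rot n a) (\<lambda>t. x (t + n))"
  by (simp add: admissible_def rot_less free_time_rot add.commute)

text \<open>Points of the system are sequences of reals: the even coordinates carry the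
  odometer coordinates \<open>a k\<close>, the odd ones the bits \<open>x n\<close>.\<close>

definition encode :: "(nat \<Rightarrow> nat) \<Rightarrow> (nat \<Rightarrow> bool) \<Rightarrow> nat \<Rightarrow> real" where
  "encode a x i = (if even i then real (a (i div 2)) else of_bool (x (i div 2)))"

lemma encode_even [simp]: "encode a x (2 * k) = real (a k)"
  and encode_odd [simp]: "encode a x (Suc (2 * n)) = of_bool (x n)"
  by (simp_all add: encode_def)

lemma encode_prefix_eq:
  "(\<forall>k<B. a k = a' k) \<Longrightarrow> (\<forall>t<B. x t = x' t) \<Longrightarrow> \<forall>i<B. encode a x i = encode a' x' i"
  unfolding encode_def by auto

definition Xsys :: "(nat \<Rightarrow> real) set" where
  "Xsys = {encode a x | a x. admissible a x}"

text \<open>A continuous function on the reals that agrees with \<open>m \<mapsto> (m + 1) mod q\<close> on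
  \<open>{0..<q}\<close>; it makes \<open>Tsys\<close> continuous on the whole product space.\<close>

definition step_mod :: "nat \<Rightarrow> real \<Rightarrow> real" where
  "step_mod q t = t + 1 - real q * max 0 (min 1 (t + 2 - real q))"

definition Tsys :: "(nat \<Rightarrow> real) \<Rightarrow> nat \<Rightarrow> real" where
  "Tsys p i = (if even i then step_mod (modulus (i div 2)) (p i) else p (i + 2))"

lemma encode_in_Xsys: "admissible a x \<Longrightarrow> encode a x \<in> Xsys"
  unfolding Xsys_def by blast

lemma XsysE:
  assumes "p \<in> Xsys"
  obtains a x where "p = encode a x" "admissible a x"
  using assms unfolding Xsys_def by blast

lemma step_mod_of_nat: "m < q \<Longrightarrow> step_mod q (real m) = real ((m + 1) mod q)"
  by (cases "m + 1 = q") (auto simp: step_mod_def)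

lemma Tsys_encode:
  assumes "\<And>k. a k < modulus k"
  shows "Tsys (encode a x) = encode (rot 1 a) (\<lambda>n. x (Suc n))"
proof
  fix i
  show "Tsys (encode a x) i = encode (rot 1 a) (\<lambda>n. x (Suc n)) i"
  proof (cases "even i")
    case True
    then show ?thesis
      by (simp add: Tsys_def encode_def rot_def step_mod_of_nat assms)
  next
    case False
    then have "(i + 2) div 2 = Suc (i div 2)" by presburger
    then show ?thesis using False by (simp add: Tsys_def encode_def)
  qed
qed

lemma funpow_Tsys_encode:
  assumes "\<And>k. a k < modulus k"
  shows "(Tsys ^^ n) (encode a x) = encode (rot n a) (\<lambda>t. x (t + n))"
proof (induction n)
  case 0
  then show ?case by (simp add: rot_0 assms)
next
  case (Suc n)
  then show ?case by (simp add: Tsys_encode rot_less rot_rot)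
qed

lemma funpow_Tsys_admissible:
  "admissible a x \<Longrightarrow> (Tsys ^^ n) (encode a x) = encode (rot n a) (\<lambda>t. x (t + n))"
  by (rule funpow_Tsys_encode) (rule admissible_less)

lemma funpow_Tsys_Xsys: "p \<in> Xsys \<Longrightarrow> (Tsys ^^ n) p \<in> Xsys"
  by (auto elim!: XsysE simp: funpow_Tsys_admissible admissible_rot encode_in_Xsys)

lemma Tsys_image_Xsys: "Tsys ` Xsys = Xsys"
proof
  show "Tsys ` Xsys \<subseteq> Xsys"
    using funpow_Tsys_Xsys[where n = 1] by auto
next
  show "Xsys \<subseteq> Tsys ` Xsys"
  proof
    fix p assume "p \<in> Xsys"
    then obtain a x where p: "p = encode a x" and ax: "admissible a x" by (rule XsysE)
    define a' where "a' k = (a k + (modulus k - 1)) mod modulus k" for k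
    define x' where "x' t = (t \<noteq> 0 \<and> x (t - 1))" for t
    have a'_less: "a' k < modulus k" for k
      unfolding a'_def by (simp add: modulus_pos)
    have rot_a': "rot 1 a' = a"
    proof
      fix k
      have "(a k + (modulus k - 1) + 1) mod modulus k = a k"
        using admissible_less[OF ax] modulus_pos[of k] by (simp add: mod_add_left_eq)
      then show "rot 1 a' k = a k"
        unfolding rot_def a'_def by (simp add: mod_Suc_eq)
    qed
    have "admissible a' x'"
      unfolding admissible_def
    proof (intro conjI allI impI a'_less)
      fix n assume "x' n"
      then obtain m where "n = Suc m" "x m" unfolding x'_def by (cases n) auto
      then show "free_time a' n"
        using admissible_free_time[OF ax] free_time_rot[of 1 a' m] rot_a' by simp
    qed
    moreover have "Tsys (encode a' x') = p"
      using Tsys_encode[OF a'_less] rot_a' p unfolding x'_def by simp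
    ultimately show "p \<in> Tsys ` Xsys" using encode_in_Xsys by blast
  qed
qed

lemma continuous_on_Tsys: "continuous_on S Tsys"
  unfolding Tsys_def[abs_def]
proof (intro continuous_on_coordinatewise_then_product)
  have coord: "continuous_on S (\<lambda>p::nat\<Rightarrow>real. p i)" for i
    by (rule continuous_on_subset[OF continuous_on_product_coordinates]) simp
  fix i
  show "continuous_on S (\<lambda>p. if even i then step_mod (modulus (i div 2)) (p i) else p (i + 2))"
    unfolding step_mod_def by (cases "even i") (auto intro!: continuous_intros coord)
qed

section \<open>Compactness and the product metric\<close>

definition digit_range :: "nat \<Rightarrow> real set" where
  "digit_range i = (if even i then real ` {..<modulus (i div 2)} else {0, 1})"

definition free_residues :: "nat \<Rightarrow> nat \<Rightarrow> nat set" where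
  "free_residues n k = {m. m < modulus k \<and> k < (m + n) mod modulus k}"

lemma Xsys_coordinates:
  assumes "p \<in> Xsys"
  shows "p i \<in> digit_range i" and "p (2*n+1) = 0 \<or> p (2*k) \<in> real ` free_residues n k"
proof -
  obtain a x where p: "p = encode a x" and ax: "admissible a x" using assms by (rule XsysE)
  show "p i \<in> digit_range i"
  proof (cases "even i")
    case True
    then show ?thesis using admissible_less[OF ax] by (simp add: p encode_def digit_range_def)
  qed (simp add: p encode_def digit_range_def)
  show "p (2*n+1) = 0 \<or> p (2*k) \<in> real ` free_residues n k"
  proof (cases "x n")
    case True
    then have "a k \<in> free_residues n k"
      using admissible_less[OF ax, of k] admissible_free_time[OF ax, of n]
      by (simp add: free_residues_def free_time_def rot_def)
    then show ?thesis unfolding p encode_even by blast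
  qed (simp add: p)
qed

lemma in_Xsys_if_coordinates:
  assumes range: "\<And>i. p i \<in> digit_range i"
    and free: "\<And>n k. p (2*n+1) = 0 \<or> p (2*k) \<in> real ` free_residues n k"
  shows "p \<in> Xsys"
proof -
  define a where "a k = nat \<lfloor>p (2*k)\<rfloor>" for k
  define x where "x n = (p (2*n+1) = 1)" for n
  have pa: "p (2*k) = real (a k) \<and> a k < modulus k" for k
    using range[of "2*k"] by (auto simp: digit_range_def a_def)
  have px: "p (2*n+1) = of_bool (x n)" for n
    using range[of "2*n+1"] by (auto simp: digit_range_def x_def)
  have "p = encode a x"
  proof
    fix i show "p i = encode a x i"
    proof (cases "even i")
      case True
      then obtain k where "i = 2*k" by blast
      then show ?thesis using pa[of k] by simp
    next
      case False
      then obtain n where "i = 2*n+1" using oddE by blast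
      then show ?thesis using px[of n] by simp
    qed
  qed
  moreover have "admissible a x"
    unfolding admissible_def free_time_def rot_def
  proof (intro conjI allI impI)
    fix k show "a k < modulus k" using pa by blast
  next
    fix n k assume "x n"
    then have "p (2*k) \<in> real ` free_residues n k" using free[of n k] px[of n] by auto
    then show "k < (a k + n) mod modulus k" using pa[of k] by (auto simp: free_residues_def)
  qed
  ultimately show "p \<in> Xsys" using encode_in_Xsys by blast
qed

lemma closed_coordinate_preimage:
  fixes S :: "'b::topological_space set"
  assumes "closed S"
  shows "closed {p :: 'a \<Rightarrow> 'b. p i \<in> S}"
proof -
  have "continuous_on UNIV (\<lambda>p::'a \<Rightarrow> 'b. p i)" by simp
  then have "closed ((\<lambda>p::'a \<Rightarrow> 'b. p i) -` S \<inter> UNIV)"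
    using assms continuous_on_closed_vimage closed_UNIV by blast
  then show ?thesis by (simp add: vimage_def)
qed

lemma compact_Xsys: "compact Xsys"
proof -
  let ?constraints = "\<Inter>n. \<Inter>k. {p. p (2*n+1) = 0 \<or> p (2*k) \<in> real ` free_residues n k}"
  have "compactin (product_topology (\<lambda>i. euclidean) UNIV) (PiE UNIV digit_range)"
    unfolding compactin_PiE digit_range_def by (auto intro: finite_imp_compact)
  then have compact: "compact (PiE UNIV digit_range)" by (simp add: euclidean_product_topology)
  have "closed ({p. p (2*n+1) \<in> {0}} \<union> {p. p (2*k) \<in> real ` free_residues n k})" for n k
    by (intro closed_Un closed_coordinate_preimage)
      (auto intro: finite_imp_closed simp: free_residues_def)
  then have closed: "closed ?constraints"
    by (intro closed_INT ballI) (simp add: Collect_disj_eq)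
  have "Xsys = PiE UNIV digit_range \<inter> ?constraints"
  proof (intro equalityI subsetI)
    fix p assume p: "p \<in> Xsys"
    then have "p \<in> PiE UNIV digit_range" using Xsys_coordinates(1) by (simp add: PiE_iff)
    moreover have "p \<in> ?constraints" using Xsys_coordinates(2)[OF p] by blast
    ultimately show "p \<in> PiE UNIV digit_range \<inter> ?constraints" by blast
  next
    fix p assume p: "p \<in> PiE UNIV digit_range \<inter> ?constraints"
    show "p \<in> Xsys"
    proof (rule in_Xsys_if_coordinates)
      show "p i \<in> digit_range i" for i using p by (simp add: PiE_iff)
      show "p (2*n+1) = 0 \<or> p (2*k) \<in> real ` free_residues n k" for n k using p by blast
    qed
  qed
  then show ?thesis using compact_Int_closed[OF compact closed] by simp
qed

text \<open>The metric on \<open>nat \<Rightarrow> 'b\<close> weights coordinate \<open>from_nat n\<close> by \<open>2\<^sup>-\<^sup>n\<close>, and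
  \<open>from_nat\<close> need not be the identity on \<open>nat\<close>; hence the cutoff.\<close>

definition dist_cutoff :: "nat \<Rightarrow> nat" where
  "dist_cutoff N = Suc (Max (from_nat ` {..N} :: nat set))"

lemma dist_le_if_prefix_eq:
  fixes p p' :: "nat \<Rightarrow> 'b::metric_space"
  assumes "\<forall>i<dist_cutoff N. p i = p' i"
  shows "dist p p' \<le> (1/2)^N"
proof -
  have "from_nat n < dist_cutoff N" if "n \<le> N" for n
    unfolding dist_cutoff_def using that by (simp add: le_imp_less_Suc)
  then have "{dist (p (from_nat n)) (p' (from_nat n)) |n. n \<le> N} = {0}"
    using assms by (auto intro!: exI[of _ 0])
  then show ?thesis using dist_fun_le_dist_first_terms[of p p' N] by simp
qed

lemma dist_coordinate_le:
  fixes p p' :: "'a::countable \<Rightarrow> 'b::metric_space"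
  shows "(1/2)^(to_nat i) * min (dist (p i) (p' i)) 1 \<le> dist p p'"
proof -
  define f where "f n = (1/2)^n * min (dist (p (from_nat n)) (p' (from_nat n))) 1" for n
  have "summable f" unfolding f_def
    by (rule summable_comparison_test'[of "\<lambda>n. (1/2)^n"]) (auto simp: summable_geometric_iff)
  then have "sum f {to_nat i} \<le> suminf f"
    by (rule sum_le_suminf) (auto simp: f_def)
  then show ?thesis unfolding f_def dist_fun_def by simp
qed

lemma openin_prefix_nbhd:
  fixes S :: "(nat \<Rightarrow> 'b::metric_space) set"
  assumes "openin (top_of_set S) U" "p0 \<in> U"
  obtains B where "\<And>p. p \<in> S \<Longrightarrow> \<forall>i<B. p i = p0 i \<Longrightarrow> p \<in> U"
proof -
  obtain e where e: "e > 0" "ball p0 e \<inter> S \<subseteq> U"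
    using assms openin_contains_ball by metis
  obtain N where N: "(1/2::real)^N < e"
    using real_arch_pow_inv[OF e(1), of "1/2"] by auto
  show thesis
  proof (rule that)
    fix p assume "p \<in> S" "\<forall>i<dist_cutoff N. p i = p0 i"
    then have "dist p0 p \<le> (1/2)^N" using dist_le_if_prefix_eq[of N p0 p] by auto
    then have "p \<in> ball p0 e \<inter> S" using N \<open>p \<in> S\<close> by simp
    then show "p \<in> U" using e(2) by blast
  qed
qed

section \<open>Completing finite patterns: transitivity and sensitivity\<close>

lemma card_shifted_residues_le: "card {c. c < q \<and> (c + t) mod q \<le> k} \<le> Suc k"
proof -
  have "inj_on (\<lambda>c. (c + t) mod q) {c. c < q \<and> (c + t) mod q \<le> k}"
  proof
    fix c c' assume c: "c \<in> {c. c < q \<and> (c + t) mod q \<le> k}" "c' \<in> {c. c < q \<and> (c + t) mod q \<le> k}"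
      and "(c + t) mod q = (c' + t) mod q"
    then have "[c + t = c' + t] (mod q)" by (simp add: cong_def)
    then have "[c = c'] (mod q)" by (simp add: cong_add_rcancel_nat)
    then show "c = c'" using c by (simp add: cong_def)
  qed
  then have "card {c. c < q \<and> (c + t) mod q \<le> k} \<le> card {..k}"
    by (rule card_inj_on_le) auto
  then show ?thesis by simp
qed

lemma exists_residue_avoiding:
  assumes "finite Ts" "card Ts * Suc k < q"
  shows "\<exists>c<q. \<forall>t\<in>Ts. k < (c + t) mod q"
proof -
  let ?bad = "\<Union>t\<in>Ts. {c. c < q \<and> (c + t) mod q \<le> k}"
  have "card ?bad \<le> (\<Sum>t\<in>Ts. card {c. c < q \<and> (c + t) mod q \<le> k})"
    by (rule card_UN_le[OF assms(1)])
  also have "\<dots> \<le> (\<Sum>t\<in>Ts. Suc k)" by (intro sum_mono card_shifted_residues_le)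
  also have "\<dots> = card Ts * Suc k" by simp
  finally have "card ?bad < card {..<q}" using assms by simp
  moreover have "finite ?bad" by (rule finite_subset[of _ "{..<q}"]) auto
  ultimately have "\<not> {..<q} \<subseteq> ?bad" using card_mono leD by blast
  then obtain c where "c < q" "c \<notin> ?bad" by auto
  then show ?thesis by (intro exI[of _ c]) auto
qed

text \<open>The first \<open>K\<close> odometer coordinates are prescribed; in each later coordinate \<open>k\<close> some
  residue avoids the at most \<open>card {t. x t} * (k + 1) < q\<^sub>k\<close> forbidden ones.\<close>

lemma exists_admissible_extension:
  assumes "finite {t. x t}" "card {t. x t} \<le> K" "\<And>k. k < K \<Longrightarrow> \<alpha> k < modulus k"
    and "\<And>t k. x t \<Longrightarrow> k < K \<Longrightarrow> k < rot t \<alpha> k"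
  obtains a where "\<And>k. k < K \<Longrightarrow> a k = \<alpha> k" "admissible a x"
proof -
  have "\<exists>c<modulus k. (\<forall>t\<in>{t. x t}. k < (c + t) mod modulus k) \<and> (k < K \<longrightarrow> c = \<alpha> k)" for k
  proof (cases "k < K")
    case False
    then have "card {t. x t} * Suc k < modulus k"
      using assms(2) mult_Suc_less_modulus[of "card {t. x t}" k] by simp
    then show ?thesis using exists_residue_avoiding[OF assms(1)] False by blast
  qed (use assms in \<open>auto simp: rot_def\<close>)
  then have "\<forall>k. \<exists>c. c < modulus k \<and> (\<forall>t\<in>{t. x t}. k < (c + t) mod modulus k) \<and> (k < K \<longrightarrow> c = \<alpha> k)"
    by blast
  from choice[OF this] obtain a
    where "\<forall>k. a k < modulus k \<and> (\<forall>t\<in>{t. x t}. k < (a k + t) mod modulus k) \<and> (k < K \<longrightarrow> a k = \<alpha> k)"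
    by blast
  then show ?thesis by (intro that[of a]) (auto simp: admissible_def free_time_def rot_def)
qed

lemma admissible_fewer_bits: "admissible a x \<Longrightarrow> (\<And>n. y n \<Longrightarrow> x n) \<Longrightarrow> admissible a y"
  by (simp add: admissible_def)

lemma add_mod_eq_target:
  fixes a b m q :: nat
  assumes "a < q" "b < q" "m mod q = (b + q - a) mod q"
  shows "(a + m) mod q = b"
proof -
  have "(a + m) mod q = (a + (b + q - a)) mod q"
    using assms(3) by (metis mod_add_right_eq)
  also have "a + (b + q - a) = b + q" using assms(1) by simp
  finally show ?thesis using assms(2) by simp
qed

lemma exists_admissible_connecting:
  assumes \<alpha>\<xi>: "admissible \<alpha> \<xi>" and \<beta>\<eta>: "admissible \<beta> \<eta>"
  obtains m a x where "m \<ge> 1" "admissible a x" "\<forall>k<B. a k = \<alpha> k" "\<forall>t<B. x t = \<xi> t"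
    "\<forall>k<B. rot m a k = \<beta> k" "\<forall>t<B. x (t + m) = \<eta> t"
proof -
  obtain m where m: "m \<ge> B + 1" "\<forall>k<2*B. m mod modulus k = (\<beta> k + modulus k - \<alpha> k) mod modulus k"
    using modulus_chinese_remainder[of "B + 1" "2*B" "\<lambda>k. \<beta> k + modulus k - \<alpha> k"] by auto
  have rot_m: "rot m \<alpha> k = \<beta> k" if "k < 2*B" for k
    unfolding rot_def
    using add_mod_eq_target admissible_less[OF \<alpha>\<xi>] admissible_less[OF \<beta>\<eta>] m(2) that by blast
  define x where "x t = ((t < B \<and> \<xi> t) \<or> (m \<le> t \<and> t < m + B \<and> \<eta> (t - m)))" for t
  have support: "{t. x t} \<subseteq> {..<B} \<union> {m..<m + B}" by (auto simp: x_def)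
  have "k < rot t \<alpha> k" if "x t" "k < 2*B" for t k
  proof (cases "t < B \<and> \<xi> t")
    case True
    then show ?thesis using admissible_free_time[OF \<alpha>\<xi>] free_time_def by blast
  next
    case False
    then have t: "m \<le> t" "\<eta> (t - m)" using \<open>x t\<close> by (auto simp: x_def)
    then have "rot t \<alpha> k = rot (t - m) (rot m \<alpha>) k" by (simp add: rot_rot)
    also have "\<dots> = rot (t - m) \<beta> k" using rot_m[OF that(2)] by (simp add: rot_def)
    finally show ?thesis using admissible_free_time[OF \<beta>\<eta> t(2)] free_time_def by metis
  qed
  moreover have "finite {t. x t}" using support by (rule finite_subset) simp
  moreover have "card {t. x t} \<le> 2*B"
    using card_mono[OF _ support] card_Un_le[of "{..<B}" "{m..<m + B}"] by simp
  ultimately obtain a where a: "\<And>k. k < 2*B \<Longrightarrow> a k = \<alpha> k" "admissible a x"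
    using exists_admissible_extension[of x "2*B" \<alpha>] admissible_less[OF \<alpha>\<xi>] by metis
  moreover have "rot m a k = \<beta> k" if "k < B" for k
    using rot_m a(1) that by (simp add: rot_def)
  ultimately show thesis
    using that[of m a x] m(1) by (simp add: x_def)
qed

lemma exists_admissible_late_bit:
  assumes \<alpha>\<xi>: "admissible \<alpha> \<xi>"
  obtains n a x where "n \<ge> N" "n \<ge> B" "admissible a x" "x n" "\<forall>k<B. a k = \<alpha> k" "\<forall>t<B. x t = \<xi> t"
proof -
  obtain n where n: "n \<ge> max N B"
    "\<forall>k<B+1. n mod modulus k = ((modulus k - 1) + modulus k - \<alpha> k) mod modulus k"
    using modulus_chinese_remainder[of "max N B" "B+1" "\<lambda>k. (modulus k - 1) + modulus k - \<alpha> k"]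
    by auto
  have rot_n: "rot n \<alpha> k = modulus k - 1" if "k < B + 1" for k
    unfolding rot_def using add_mod_eq_target admissible_less[OF \<alpha>\<xi>] modulus_pos n(2) that
    by (metis diff_less zero_less_one)
  define x where "x t = ((t < B \<and> \<xi> t) \<or> t = n)" for t
  have support: "{t. x t} \<subseteq> {..<B} \<union> {n}" by (auto simp: x_def)
  have "k < rot t \<alpha> k" if "x t" "k < B + 1" for t k
  proof (cases "t = n")
    case True
    then show ?thesis using rot_n[OF that(2)] Suc_less_modulus[of k] by simp
  next
    case False
    then show ?thesis
      using that(1) admissible_free_time[OF \<alpha>\<xi>] free_time_def unfolding x_def by blast
  qed
  moreover have "finite {t. x t}" using support by (rule finite_subset) simp
  moreover have "card {t. x t} \<le> B + 1"
    using card_mono[OF _ support] card_Un_le[of "{..<B}" "{n}"] by simp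
  ultimately obtain a where "\<And>k. k < B + 1 \<Longrightarrow> a k = \<alpha> k" "admissible a x"
    using exists_admissible_extension[of x "B + 1" \<alpha>] admissible_less[OF \<alpha>\<xi>] by metis
  then show thesis
    using that[of n a x] n(1) by (simp add: x_def)
qed

lemma opene_Xsys_prefix_nbhd:
  assumes "opene Xsys U"
  obtains \<alpha> \<xi> B where "admissible \<alpha> \<xi>"
    "\<And>p. p \<in> Xsys \<Longrightarrow> \<forall>i<B. p i = encode \<alpha> \<xi> i \<Longrightarrow> p \<in> U"
proof -
  from assms obtain p0 where p0: "p0 \<in> U" and U: "openin (top_of_set Xsys) U"
    unfolding opene_def by blast
  then have "p0 \<in> Xsys" by (meson openin_imp_subset subsetD)
  then obtain \<alpha> \<xi> where "p0 = encode \<alpha> \<xi>" "admissible \<alpha> \<xi>" by (rule XsysE)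
  moreover obtain B where "\<And>p. p \<in> Xsys \<Longrightarrow> \<forall>i<B. p i = p0 i \<Longrightarrow> p \<in> U"
    using openin_prefix_nbhd[OF U p0] by blast
  ultimately show thesis using that by blast
qed

lemma transitive_Xsys: "transitive Xsys Tsys"
  unfolding transitive_def
proof (intro allI impI)
  fix U V assume "opene Xsys U" "opene Xsys V"
  obtain \<alpha> \<xi> B1 where \<alpha>\<xi>: "admissible \<alpha> \<xi>"
    and U: "\<And>p. p \<in> Xsys \<Longrightarrow> \<forall>i<B1. p i = encode \<alpha> \<xi> i \<Longrightarrow> p \<in> U"
    using opene_Xsys_prefix_nbhd[OF \<open>opene Xsys U\<close>] by blast
  obtain \<beta> \<eta> B2 where \<beta>\<eta>: "admissible \<beta> \<eta>"
    and V: "\<And>p. p \<in> Xsys \<Longrightarrow> \<forall>i<B2. p i = encode \<beta> \<eta> i \<Longrightarrow> p \<in> V"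
    using opene_Xsys_prefix_nbhd[OF \<open>opene Xsys V\<close>] by blast
  obtain m a x where m: "m \<ge> 1" "admissible a x"
      "\<forall>k<max B1 B2. a k = \<alpha> k" "\<forall>t<max B1 B2. x t = \<xi> t"
      "\<forall>k<max B1 B2. rot m a k = \<beta> k" "\<forall>t<max B1 B2. x (t + m) = \<eta> t"
    using exists_admissible_connecting[OF \<alpha>\<xi> \<beta>\<eta>] by metis
  have "encode a x \<in> U"
    using U encode_in_Xsys[OF m(2)] encode_prefix_eq[OF m(3,4)] by simp
  moreover have "(Tsys ^^ m) (encode a x) \<in> V"
    using V encode_in_Xsys[OF admissible_rot[OF m(2)]] encode_prefix_eq[OF m(5,6)]
    by (simp add: funpow_Tsys_admissible[OF m(2)])
  ultimately show "\<exists>n\<ge>1. (Tsys ^^ n) ` U \<inter> V \<noteq> {}" using m(1) by blast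
qed

lemma dist_encode_first_bit:
  "x 0 \<noteq> y 0 \<Longrightarrow> (1/2)^(to_nat (1::nat)) \<le> dist (encode a x) (encode b y)"
  using dist_coordinate_le[of "1::nat" "encode a x" "encode b y"]
    encode_odd[of a x 0] encode_odd[of b y 0] by (cases "x 0") auto

lemma sensitive_Xsys: "sensitive Xsys Tsys"
  unfolding sensitive_def
proof (intro exI[of _ "(1/2)^(to_nat (1::nat)) / 2"] conjI allI impI)
  let ?\<delta> = "(1/2::real)^(to_nat (1::nat)) / 2"
  show "?\<delta> > 0" by simp
  fix U assume "opene Xsys U"
  then obtain \<alpha> \<xi> B where \<alpha>\<xi>: "admissible \<alpha> \<xi>"
    and B: "\<And>p. p \<in> Xsys \<Longrightarrow> \<forall>i<B. p i = encode \<alpha> \<xi> i \<Longrightarrow> p \<in> U"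
    using opene_Xsys_prefix_nbhd by blast
  show "infinite (S_T Tsys U ?\<delta>)"
    unfolding infinite_nat_iff_unbounded_le
  proof
    fix N
    obtain n a x where n: "n \<ge> max N 1" "n \<ge> B" "admissible a x" "x n"
        "\<forall>k<B. a k = \<alpha> k" "\<forall>t<B. x t = \<xi> t"
      using exists_admissible_late_bit[OF \<alpha>\<xi>] by metis
    define x' where "x' = x(n := False)"
    have x': "admissible a x'"
      by (rule admissible_fewer_bits[OF n(3)]) (simp add: x'_def split: if_splits)
    have "encode a x \<in> U"
      using B encode_in_Xsys[OF n(3)] encode_prefix_eq[OF n(5,6)] by simp
    moreover have "encode a x' \<in> U"
      using B encode_in_Xsys[OF x'] encode_prefix_eq[OF n(5), of x' \<xi>] n(2,6)
      by (simp add: x'_def)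
    moreover have "?\<delta> < dist ((Tsys ^^ n) (encode a x)) ((Tsys ^^ n) (encode a x'))"
    proof -
      have "(1/2)^(to_nat (1::nat))
          \<le> dist (encode (rot n a) (\<lambda>t. x (t + n))) (encode (rot n a) (\<lambda>t. x' (t + n)))"
        by (rule dist_encode_first_bit) (simp add: x'_def n(4))
      moreover have "(0::real) < (1/2)^(to_nat (1::nat))" by simp
      ultimately show ?thesis
        unfolding funpow_Tsys_admissible[OF n(3)] funpow_Tsys_admissible[OF x'] by linarith
    qed
    ultimately have "n \<in> S_T Tsys U ?\<delta>" unfolding S_T_def using n(1) by auto
    then show "\<exists>n\<ge>N. n \<in> S_T Tsys U ?\<delta>" using n(1) by auto
  qed
qed

section \<open>Syndetic equicontinuity\<close>

lemma syndetic_mono: "A \<subseteq> B \<Longrightarrow> syndetic A \<Longrightarrow> syndetic B"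
  unfolding syndetic_def by blast

lemma syndetic_thick_meet: "syndetic A \<Longrightarrow> thick B \<Longrightarrow> A \<inter> B \<noteq> {}"
  unfolding syndetic_def thick_def by (metis atLeastLessThan_iff disjoint_iff subset_iff)

lemma not_thickly_sensitive_if_Eq_syn:
  assumes "x \<in> Eq_syn X T"
  shows "\<not> thickly_sensitive X T"
proof
  assume "thickly_sensitive X T"
  then obtain \<delta> where "\<delta> > 0" and thick: "\<And>U. opene X U \<Longrightarrow> thick (S_T T U \<delta>)"
    unfolding thickly_sensitive_def by blast
  then obtain U where "openin (top_of_set X) U" "x \<in> U" "syndetic (J_T T U \<delta>)"
    using assms unfolding Eq_syn_def by blast
  then have "J_T T U \<delta> \<inter> S_T T U \<delta> \<noteq> {}"
    using syndetic_thick_meet thick unfolding opene_def by blast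
  then show False unfolding J_T_def by blast
qed

lemma syndetic_residue_class:
  assumes "0 < q"
  shows "syndetic {n. 1 \<le> n \<and> (c + n) mod q = (0::nat)}"
  unfolding syndetic_def
proof (intro exI[of _ "q + 1"] allI)
  fix m
  define d r where "d = (c + m) div q" and "r = (c + m) mod q"
  have dr: "c + m = d * q + r" "r < q"
    unfolding d_def r_def using assms by simp_all
  define n where "n = m + q - r"
  have "n + r = m + q" unfolding n_def using dr(2) by simp
  then have "c + n = q + d * q" using dr(1) by linarith
  then have "(c + n) mod q = 0" by (simp only: mod_mult_self1 mod_self)
  moreover have "1 \<le> n" "m \<le> n" "n < m + (q + 1)"
    using \<open>n + r = m + q\<close> dr(2) by linarith+
  ultimately show "\<exists>n\<in>{n. 1 \<le> n \<and> (c + n) mod q = 0}. m \<le> n \<and> n < m + (q + 1)"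
    by (intro bexI[of _ n]) simp_all
qed

text \<open>Once the \<open>B\<close>-th odometer coordinate has returned to \<open>0\<close>, the next \<open>B\<close> times are not
  free, so all bits in the visible window vanish.\<close>

lemma funpow_Tsys_window:
  assumes "admissible a x" "\<forall>k\<le>B. a k = \<alpha> k" "(\<alpha> B + n) mod modulus B = 0"
  shows "\<forall>i<B. (Tsys ^^ n) (encode a x) i = encode (rot n \<alpha>) (\<lambda>_. False) i"
proof -
  have rot_eq: "rot n a k = rot n \<alpha> k" if "k \<le> B" for k
    using assms(2) that by (simp add: rot_def)
  have "\<not> x (n + t)" if "t < B" for t
  proof
    assume "x (n + t)"
    then have "B < rot (n + t) a B"
      using admissible_free_time[OF assms(1)] free_time_def by blast
    also have "rot (n + t) a B = (rot n a B + t) mod modulus B"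
      by (simp add: rot_def add.assoc mod_add_left_eq)
    also have "\<dots> = (rot n \<alpha> B + t) mod modulus B" using rot_eq[of B] by simp
    also have "\<dots> = t" using assms(3) that Suc_less_modulus[of B] by (simp add: rot_def)
    finally show False using that by simp
  qed
  then show ?thesis
    unfolding funpow_Tsys_admissible[OF assms(1)] using rot_eq
    by (intro encode_prefix_eq) (auto simp: add.commute)
qed

lemma eq_if_dist_real_of_nat_less: "dist (real m) (real m') < 1 \<Longrightarrow> m = m'"
proof (rule ccontr)
  assume "dist (real m) (real m') < 1" "m \<noteq> m'"
  moreover have "m + 1 \<le> m' \<or> m' + 1 \<le> m" using \<open>m \<noteq> m'\<close> by linarith
  ultimately show False by (auto simp: dist_real_def abs_less_iff)
qed

lemma openin_odometer_nbhd:
  assumes "admissible \<alpha> \<xi>"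
  obtains U where "openin (top_of_set Xsys) U" "encode \<alpha> \<xi> \<in> U"
    "\<And>q. q \<in> U \<Longrightarrow> \<exists>a x. q = encode a x \<and> admissible a x \<and> (\<forall>k\<le>B. a k = \<alpha> k)"
proof
  let ?U = "Xsys \<inter> {f. \<forall>k\<in>{..B}. f (2*k) \<in> ball (real (\<alpha> k)) 1}"
  show "openin (top_of_set Xsys) ?U"
    by (intro openin_open_Int product_topology_basis') auto
  show "encode \<alpha> \<xi> \<in> ?U" using encode_in_Xsys[OF assms] by simp
  fix q assume "q \<in> ?U"
  then obtain a x where q: "q = encode a x" "admissible a x" by (blast elim: XsysE)
  have "a k = \<alpha> k" if "k \<le> B" for k
  proof -
    have "dist (real (\<alpha> k)) (real (a k)) < 1"
      using \<open>q \<in> ?U\<close> that unfolding q(1) by simp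
    then show ?thesis by (rule eq_if_dist_real_of_nat_less[symmetric])
  qed
  then show "\<exists>a x. q = encode a x \<and> admissible a x \<and> (\<forall>k\<le>B. a k = \<alpha> k)" using q by blast
qed

lemma Eq_syn_nbhd:
  assumes "p \<in> Xsys" "\<epsilon> > 0"
  shows "\<exists>U. openin (top_of_set Xsys) U \<and> p \<in> U \<and> syndetic (J_T Tsys U \<epsilon>)"
proof -
  obtain \<alpha> \<xi> where p: "p = encode \<alpha> \<xi>" "admissible \<alpha> \<xi>" using assms(1) by (rule XsysE)
  obtain N where N: "(1/2::real)^N < \<epsilon>" using real_arch_pow_inv[OF assms(2), of "1/2"] by auto
  obtain U where U: "openin (top_of_set Xsys) U" "encode \<alpha> \<xi> \<in> U"
    and U_odometer: "\<And>q. q \<in> U \<Longrightarrow>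
      \<exists>a x. q = encode a x \<and> admissible a x \<and> (\<forall>k\<le>dist_cutoff N. a k = \<alpha> k)"
    using openin_odometer_nbhd[OF p(2), where B = "dist_cutoff N"] by blast
  have "n \<in> J_T Tsys U \<epsilon>" if "1 \<le> n" "(\<alpha> (dist_cutoff N) + n) mod modulus (dist_cutoff N) = 0" for n
  proof -
    have window: "\<forall>i<dist_cutoff N. (Tsys ^^ n) q i = encode (rot n \<alpha>) (\<lambda>_. False) i"
      if "q \<in> U" for q
    proof -
      obtain a x where "q = encode a x" "admissible a x" "\<forall>k\<le>dist_cutoff N. a k = \<alpha> k"
        using U_odometer[OF \<open>q \<in> U\<close>] by blast
      then show ?thesis using funpow_Tsys_window[of a x "dist_cutoff N" \<alpha> n] \<open>(\<alpha> _ + n) mod _ = 0\<close>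
        by simp
    qed
    have "dist ((Tsys ^^ n) q1) ((Tsys ^^ n) q2) \<le> \<epsilon>" if "q1 \<in> U" "q2 \<in> U" for q1 q2
    proof -
      have "dist ((Tsys ^^ n) q1) ((Tsys ^^ n) q2) \<le> (1/2)^N"
        using window[OF that(1)] window[OF that(2)] by (intro dist_le_if_prefix_eq) simp
      then show ?thesis using N by linarith
    qed
    then have "n \<notin> S_T Tsys U \<epsilon>" unfolding S_T_def by (simp add: not_less)
    with \<open>1 \<le> n\<close> show ?thesis unfolding J_T_def by simp
  qed
  then have "syndetic (J_T Tsys U \<epsilon>)"
    by (intro syndetic_mono[OF _ syndetic_residue_class[OF modulus_pos[of "dist_cutoff N"],
          of "\<alpha> (dist_cutoff N)"]]) auto
  with U p(1) show ?thesis by blast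
qed

lemma Eq_syn_Xsys: "Eq_syn Xsys Tsys = Xsys"
  unfolding Eq_syn_def using Eq_syn_nbhd by blast

section \<open>The subsystem without bits\<close>

lemma encode_inject: "encode a x = encode b y \<longleftrightarrow> a = b \<and> x = y"
proof
  assume eq: "encode a x = encode b y"
  have "a k = b k" for k using fun_cong[OF eq, of "2*k"] by simp
  moreover have "x n = y n" for n
    using fun_cong[OF eq, of "Suc (2*n)"] by (cases "x n"; cases "y n") simp_all
  ultimately show "a = b \<and> x = y" by (simp add: fun_eq_iff)
qed simp

lemma encode_in_Xsys_iff: "encode a x \<in> Xsys \<longleftrightarrow> admissible a x"
  unfolding Xsys_def by (auto simp: encode_inject)

definition Xzero :: "(nat \<Rightarrow> real) set" where
  "Xzero = Xsys \<inter> (\<Inter>n. {p. p (Suc (2*n)) \<in> {0}})"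

lemma encode_in_Xzero_iff: "encode a x \<in> Xzero \<longleftrightarrow> admissible a x \<and> (\<forall>n. \<not> x n)"
  by (simp add: Xzero_def encode_in_Xsys_iff)

lemma closed_Xzero: "closed Xzero"
  unfolding Xzero_def
  by (intro closed_Int compact_imp_closed[OF compact_Xsys] closed_INT ballI
      closed_coordinate_preimage) simp

lemma Tsys_image_Xzero: "Tsys ` Xzero \<subseteq> Xzero"
proof (rule image_subsetI)
  fix p assume "p \<in> Xzero"
  then obtain a x where p: "p = encode a x" and ax: "admissible a x"
    unfolding Xzero_def by (blast elim: XsysE)
  then have "\<forall>n. \<not> x n" using \<open>p \<in> Xzero\<close> by (simp add: encode_in_Xzero_iff)
  moreover have "admissible (rot 1 a) (\<lambda>n. x (Suc n))"
    using admissible_rot[OF ax, of 1] by simp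
  ultimately show "Tsys p \<in> Xzero"
    unfolding p Tsys_encode[OF admissible_less[OF ax]] by (simp add: encode_in_Xzero_iff)
qed

lemma admissible_zero: "admissible (\<lambda>_. 0) (\<lambda>_. False)"
  by (simp add: admissible_def modulus_pos)

lemma zero_in_Xzero: "encode (\<lambda>_. 0) (\<lambda>_. False) \<in> Xzero"
  by (simp add: encode_in_Xzero_iff admissible_zero)

lemma Xzero_psubset: "Xzero \<subset> Xsys"
proof -
  have "admissible (\<lambda>k. modulus k - 1) (\<lambda>n. n = 0)"
    unfolding admissible_def free_time_def rot_def
    using modulus_pos Suc_less_modulus by (simp add: less_diff_conv)
  then have "encode (\<lambda>k. modulus k - 1) (\<lambda>n. n = 0) \<in> Xsys - Xzero"
    by (simp add: encode_in_Xsys_iff encode_in_Xzero_iff)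
  then show ?thesis unfolding Xzero_def by blast
qed

lemma not_minimal_Xsys: "\<not> minimal Xsys Tsys"
proof
  assume "minimal Xsys Tsys"
  then have "Xzero = Xsys"
    unfolding minimal_def using Xzero_psubset closed_Xzero Tsys_image_Xzero zero_in_Xzero by blast
  then show False using Xzero_psubset by simp
qed

lemma orbit_subset: "T ` Y \<subseteq> Y \<Longrightarrow> x \<in> Y \<Longrightarrow> orbit T x \<subseteq> Y"
proof -
  assume "T ` Y \<subseteq> Y" "x \<in> Y"
  then have "(T ^^ n) x \<in> Y" for n by (induction n) auto
  then show ?thesis unfolding orbit_def by blast
qed

lemma not_Tran_if_in_invariant_closed:
  assumes "closed Y" "T ` Y \<subseteq> Y" "x \<in> Y" "Y \<subset> X"
  shows "x \<notin> Tran X T"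
  using closure_minimal[OF orbit_subset[OF assms(2,3)] assms(1)] assms(4)
  unfolding Tran_def by blast

lemma Tran_psubset_Eq_syn_Xsys: "Tran Xsys Tsys \<subset> Eq_syn Xsys Tsys"
proof -
  have "encode (\<lambda>_. 0) (\<lambda>_. False) \<in> Xsys - Tran Xsys Tsys"
    using not_Tran_if_in_invariant_closed[OF closed_Xzero Tsys_image_Xzero zero_in_Xzero]
      zero_in_Xzero Xzero_psubset by blast
  then show ?thesis unfolding Eq_syn_Xsys Tran_def by blast
qed

section \<open>An invariant measure of full support\<close>

definition factor_measure :: "nat + nat \<Rightarrow> nat measure" where
  "factor_measure i = (case i of
     Inl k \<Rightarrow> measure_pmf (pmf_of_set {..<modulus k})
   | Inr n \<Rightarrow> measure_pmf (pmf_of_set {0, 1}))"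

definition seed_measure :: "(nat + nat \<Rightarrow> nat) measure" where
  "seed_measure = PiM UNIV factor_measure"

lemma prob_space_factor_measure: "prob_space (factor_measure i)"
  unfolding factor_measure_def by (cases i) (auto intro: measure_pmf.prob_space_axioms)

interpretation seeds: product_prob_space factor_measure UNIV
  by (simp add: product_prob_space_def product_sigma_finite_def prob_space_factor_measure
      prob_space_imp_sigma_finite product_prob_space_axioms_def)

interpretation seed: prob_space seed_measure
  unfolding seed_measure_def by (rule seeds.prob_space_axioms)

lemma sets_factor_measure [simp]: "sets (factor_measure i) = UNIV"
  and space_factor_measure [simp]: "space (factor_measure i) = UNIV"
  unfolding factor_measure_def by (cases i; simp)+

lemma factor_measure_Inr: "factor_measure (Inr n) = measure_pmf (pmf_of_set {0, 1})"
  by (simp add: factor_measure_def)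

lemma space_seed_measure [simp]: "space seed_measure = UNIV"
  unfolding seed_measure_def by (simp add: space_PiM)

lemma measurable_seed_coordinate: "(\<lambda>s. s i) \<in> measurable seed_measure (factor_measure i)"
  unfolding seed_measure_def by (rule measurable_component_singleton) simp

lemma measurable_seed_coordinate_comp:
  "f \<in> UNIV \<rightarrow> space N \<Longrightarrow> (\<lambda>s. f (s i)) \<in> measurable seed_measure N"
  by (rule measurable_compose[OF measurable_seed_coordinate]) (simp add: measurable_def)

lemma sets_seed_coordinate: "{s. P (s i)} \<in> sets seed_measure"
  using measurable_sets[OF measurable_seed_coordinate, of "{v. P v}" i] by (simp add: vimage_def)

lemma emeasure_factor_eq_measure: "emeasure (factor_measure i) A = measure (factor_measure i) A"
  by (cases i) (simp_all add: factor_measure_def measure_pmf.emeasure_eq_measure)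

lemma measure_seed_cylinder:
  assumes "finite J"
  shows "measure seed_measure {s. \<forall>i\<in>J. s i \<in> A i} = (\<Prod>i\<in>J. measure (factor_measure i) (A i))"
proof -
  have "emeasure seed_measure {s. \<forall>i\<in>J. s i \<in> A i} = (\<Prod>i\<in>J. emeasure (factor_measure i) (A i))"
    using seeds.emeasure_PiM_Collect[OF _ assms, of A]
    unfolding seed_measure_def by (simp add: space_PiM)
  then show ?thesis
    using emeasure_factor_eq_measure seed.emeasure_eq_measure
    by (simp add: prod_ennreal measure_nonneg prod_nonneg)
qed

lemma measure_factor_Inl:
  "measure (factor_measure (Inl k)) A = card ({..<modulus k} \<inter> A) / modulus k"
  using measure_pmf_of_set[of "{..<modulus k}"] modulus_pos[of k] by (auto simp: factor_measure_def)

lemma measure_factor_Inr: "measure (factor_measure (Inr n)) A = card ({0, 1} \<inter> A) / 2"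
  using measure_pmf_of_set[of "{0, 1::nat}"] by (simp add: factor_measure_def)

definition seed_shift :: "(nat + nat \<Rightarrow> nat) \<Rightarrow> nat + nat \<Rightarrow> nat" where
  "seed_shift s i = (case i of Inl k \<Rightarrow> Suc (s (Inl k)) mod modulus k | Inr n \<Rightarrow> s (Inr (Suc n)))"

lemma measurable_seed_shift: "seed_shift \<in> measurable seed_measure seed_measure"
proof -
  have "(\<lambda>s. seed_shift s i) \<in> measurable seed_measure (factor_measure i)" for i
  proof (cases i)
    case (Inl k)
    then show ?thesis
      using measurable_seed_coordinate_comp[of "\<lambda>v. Suc v mod modulus k" "factor_measure i" "Inl k"]
      by (simp add: seed_shift_def)
  next
    case (Inr n)
    then show ?thesis
      using measurable_seed_coordinate_comp[of "\<lambda>v. v" "factor_measure i" "Inr (Suc n)"]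
      by (simp add: seed_shift_def)
  qed
  then show ?thesis
    unfolding seed_measure_def
    by (intro measurable_PiM_single') (auto simp: space_PiM seed_measure_def)
qed

lemma bij_betw_Suc_mod: "0 < q \<Longrightarrow> bij_betw (\<lambda>v. Suc v mod q) {..<q} {..<q}"
proof -
  assume "0 < q"
  have "inj_on (\<lambda>v. Suc v mod q) {..<q}"
  proof
    fix v w assume vw: "v \<in> {..<q}" "w \<in> {..<q}" and "Suc v mod q = Suc w mod q"
    then have "[v + 1 = w + 1] (mod q)" by (simp add: cong_def)
    then have "[v = w] (mod q)" by (metis cong_add_rcancel_nat)
    then show "v = w" using vw by (simp add: cong_def)
  qed
  moreover have "(\<lambda>v. Suc v mod q) ` {..<q} \<subseteq> {..<q}" using \<open>0 < q\<close> by auto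
  ultimately show ?thesis by (simp add: bij_betw_def endo_inj_surj)
qed

lemma emeasure_factor_Inl_Suc_mod:
  "emeasure (factor_measure (Inl k)) {v. Suc v mod modulus k \<in> F}
    = emeasure (factor_measure (Inl k)) F"
proof -
  have bij: "bij_betw (\<lambda>v. Suc v mod modulus k) {..<modulus k} {..<modulus k}"
    by (rule bij_betw_Suc_mod[OF modulus_pos])
  then have "bij_betw (\<lambda>v. Suc v mod modulus k) ({..<modulus k} \<inter> {v. Suc v mod modulus k \<in> F})
      ({..<modulus k} \<inter> F)"
    unfolding bij_betw_def by (auto intro: inj_on_subset)
  then have "card ({..<modulus k} \<inter> {v. Suc v mod modulus k \<in> F}) = card ({..<modulus k} \<inter> F)"
    by (rule bij_betw_same_card)
  moreover have "{..<modulus k} \<noteq> {}" using modulus_pos[of k] by auto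
  ultimately show ?thesis by (simp add: factor_measure_def emeasure_pmf_of_set)
qed

lemma seed_shift_measure_preserving: "distr seed_measure seed_measure seed_shift = seed_measure"
  unfolding seed_measure_def
proof (rule seeds.PiM_eq)
  fix J :: "(nat + nat) set" and F
  assume J: "finite J" "J \<subseteq> UNIV" and F: "\<And>j. j \<in> J \<Longrightarrow> F j \<in> sets (factor_measure j)"
  \<comment> \<open>The preimage of a cylinder over \<open>J\<close> is a cylinder over \<open>reindex ` J\<close>.\<close>
  define reindex where "reindex j = (case j of Inl k \<Rightarrow> Inl k | Inr n \<Rightarrow> Inr (Suc n))"
    for j :: "nat + nat"
  define G where "G i = (case i of
      Inl k \<Rightarrow> {v. Suc v mod modulus k \<in> F (Inl k)} | Inr m \<Rightarrow> F (Inr (m - 1)))" for i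
  have inj: "inj reindex" unfolding inj_def reindex_def by (auto split: sum.splits)
  have "prod_emb UNIV factor_measure J (Pi\<^sub>E J F) \<in> sets (Pi\<^sub>M UNIV factor_measure)"
    using J F by (intro sets_PiM_I) auto
  then have "emeasure (distr (Pi\<^sub>M UNIV factor_measure) (Pi\<^sub>M UNIV factor_measure) seed_shift)
        (prod_emb UNIV factor_measure J (Pi\<^sub>E J F))
      = emeasure (Pi\<^sub>M UNIV factor_measure)
          (seed_shift -` prod_emb UNIV factor_measure J (Pi\<^sub>E J F) \<inter> space (Pi\<^sub>M UNIV factor_measure))"
    using measurable_seed_shift unfolding seed_measure_def by (rule emeasure_distr[rotated])
  also have "seed_shift -` prod_emb UNIV factor_measure J (Pi\<^sub>E J F) \<inter> space (Pi\<^sub>M UNIV factor_measure)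
      = {x\<in>space (Pi\<^sub>M UNIV factor_measure). \<forall>i\<in>reindex ` J. x i \<in> G i}"
  proof -
    have "seed_shift s j \<in> F j \<longleftrightarrow> s (reindex j) \<in> G (reindex j)" for s j
      unfolding seed_shift_def reindex_def G_def by (cases j) auto
    then show ?thesis by (auto simp: prod_emb_def space_PiM PiE_iff)
  qed
  also have "emeasure (Pi\<^sub>M UNIV factor_measure) \<dots>
      = (\<Prod>i\<in>reindex ` J. emeasure (factor_measure i) (G i))"
    using J by (intro seeds.emeasure_PiM_Collect) auto
  also have "\<dots> = (\<Prod>j\<in>J. emeasure (factor_measure (reindex j)) (G (reindex j)))"
    by (rule prod.reindex[OF inj_on_subset[OF inj subset_UNIV], unfolded comp_def])
  also have "\<dots> = (\<Prod>j\<in>J. emeasure (factor_measure j) (F j))"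
  proof (rule prod.cong[OF refl])
    fix j
    show "emeasure (factor_measure (reindex j)) (G (reindex j)) = emeasure (factor_measure j) (F j)"
      by (cases j) (simp_all add: reindex_def G_def emeasure_factor_Inl_Suc_mod factor_measure_Inr)
  qed
  finally show "emeasure (distr (Pi\<^sub>M UNIV factor_measure) (Pi\<^sub>M UNIV factor_measure) seed_shift)
      (prod_emb UNIV factor_measure J (Pi\<^sub>E J F)) = (\<Prod>j\<in>J. emeasure (factor_measure j) (F j))" .
qed simp

definition seed_odometer :: "(nat + nat \<Rightarrow> nat) \<Rightarrow> nat \<Rightarrow> nat" where
  "seed_odometer s k = s (Inl k) mod modulus k"

definition seed_bits :: "(nat + nat \<Rightarrow> nat) \<Rightarrow> nat \<Rightarrow> bool" where
  "seed_bits s n \<longleftrightarrow> odd (s (Inr n)) \<and> free_time (seed_odometer s) n"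

text \<open>A seed chooses all odometer coordinates and all bits independently; \<open>realize\<close> then
  clears the bits at times that are not free. It intertwines \<open>seed_shift\<close> with \<open>Tsys\<close>, which
  makes the image of \<open>seed_measure\<close> invariant.\<close>

definition realize :: "(nat + nat \<Rightarrow> nat) \<Rightarrow> nat \<Rightarrow> real" where
  "realize s = encode (seed_odometer s) (seed_bits s)"

lemma seed_odometer_less: "seed_odometer s k < modulus k"
  by (simp add: seed_odometer_def modulus_pos)

lemma realize_in_Xsys: "realize s \<in> Xsys"
  unfolding realize_def
  by (rule encode_in_Xsys) (simp add: admissible_def seed_bits_def seed_odometer_less)

lemma realize_seed_shift: "realize (seed_shift s) = Tsys (realize s)"
proof -
  have odometer: "seed_odometer (seed_shift s) = rot 1 (seed_odometer s)"
    by (simp add: fun_eq_iff seed_odometer_def seed_shift_def rot_def mod_Suc_eq)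
  have "seed_bits (seed_shift s) = (\<lambda>n. seed_bits s (Suc n))"
    using free_time_rot[of 1 "seed_odometer s"]
    by (simp add: fun_eq_iff seed_bits_def odometer seed_shift_def)
  then show ?thesis
    unfolding realize_def Tsys_encode[OF seed_odometer_less] odometer by simp
qed

lemma measurable_realize: "realize \<in> measurable seed_measure (restrict_space borel Xsys)"
proof (rule measurable_restrict_space2)
  show "realize \<in> space seed_measure \<rightarrow> Xsys" using realize_in_Xsys by simp
  show "realize \<in> borel_measurable seed_measure"
  proof (rule measurable_coordinatewise_then_product)
    fix i
    show "(\<lambda>s. realize s i) \<in> borel_measurable seed_measure"
    proof (cases "even i")
      case True
      then show ?thesis
        using measurable_seed_coordinate_comp[of "\<lambda>v. real (v mod modulus (i div 2))" borel]
        by (simp add: realize_def encode_def seed_odometer_def)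
    next
      case False
      define n where "n = i div 2"
      have "{s. seed_bits s n}
          = {s. odd (s (Inr n))} \<inter> (\<Inter>k. {s. k < (s (Inl k) mod modulus k + n) mod modulus k})"
        by (auto simp: seed_bits_def free_time_def rot_def seed_odometer_def)
      also have "\<dots> \<in> sets seed_measure"
      proof -
        have "{s. k < (s (Inl k) mod modulus k + n) mod modulus k} \<in> sets seed_measure" for k
          using sets_seed_coordinate[of "\<lambda>v. k < (v mod modulus k + n) mod modulus k" "Inl k"]
          by simp
        then show ?thesis by (intro sets.Int sets.countable_INT' sets_seed_coordinate) auto
      qed
      finally have "(indicator {s. seed_bits s n} :: _ \<Rightarrow> real) \<in> borel_measurable seed_measure"
        by (rule borel_measurable_indicator)
      moreover have "(indicator {s. seed_bits s n} :: _ \<Rightarrow> real) = (\<lambda>s. of_bool (seed_bits s n))"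
        by (simp add: fun_eq_iff indicator_def)
      ultimately have "(\<lambda>s. of_bool (seed_bits s n) :: real) \<in> borel_measurable seed_measure"
        by simp
      then show ?thesis using False by (simp add: realize_def encode_def n_def)
    qed
  qed
qed

definition inv_measure :: "(nat \<Rightarrow> real) measure" where
  "inv_measure = distr seed_measure (restrict_space borel Xsys) realize"

lemma measurable_Tsys: "Tsys \<in> measurable (restrict_space borel Xsys) (restrict_space borel Xsys)"
proof (rule measurable_restrict_space2)
  show "Tsys \<in> space (restrict_space borel Xsys) \<rightarrow> Xsys"
    using Tsys_image_Xsys by (auto simp: space_restrict_space)
  show "Tsys \<in> borel_measurable (restrict_space borel Xsys)"
    by (rule borel_measurable_continuous_on_restrict[OF continuous_on_Tsys])
qed

lemma inv_measure_invariant: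
  assumes "A \<in> sets inv_measure"
  shows "measure inv_measure (Tsys -` A \<inter> Xsys) = measure inv_measure A"
proof -
  have A: "A \<in> sets (restrict_space borel Xsys)" using assms unfolding inv_measure_def by simp
  have TA: "Tsys -` A \<inter> Xsys \<in> sets (restrict_space borel Xsys)"
    using measurable_sets[OF measurable_Tsys A] by (simp add: space_restrict_space)
  have "measure inv_measure (Tsys -` A \<inter> Xsys)
      = measure seed_measure (realize -` (Tsys -` A \<inter> Xsys))"
    unfolding inv_measure_def using measure_distr[OF measurable_realize TA] by simp
  also have "realize -` (Tsys -` A \<inter> Xsys) = seed_shift -` (realize -` A)"
    using realize_in_Xsys realize_seed_shift by auto
  also have "measure seed_measure \<dots>
      = measure (distr seed_measure seed_measure seed_shift) (realize -` A)"
    using measure_distr[OF measurable_seed_shift measurable_sets[OF measurable_realize A]] by simp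
  also have "\<dots> = measure inv_measure A"
    unfolding seed_shift_measure_preserving inv_measure_def
    using measure_distr[OF measurable_realize A] by simp
  finally show ?thesis .
qed

lemma measure_factor_bad_residues:
  assumes "finite Ts" "card Ts \<le> B"
  shows "measure (factor_measure (Inl k)) {v. \<exists>t\<in>Ts. (v mod modulus k + t) mod modulus k \<le> k}
    \<le> B / 2 ^ Suc k"
proof -
  let ?q = "modulus k"
  let ?bad = "{v. \<exists>t\<in>Ts. (v mod ?q + t) mod ?q \<le> k}"
  have "{..<?q} \<inter> ?bad = (\<Union>t\<in>Ts. {c. c < ?q \<and> (c + t) mod ?q \<le> k})" by auto
  then have "card ({..<?q} \<inter> ?bad) \<le> (\<Sum>t\<in>Ts. card {c. c < ?q \<and> (c + t) mod ?q \<le> k})"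
    using card_UN_le[OF assms(1)] by simp
  also have "\<dots> \<le> (\<Sum>t\<in>Ts. Suc k)" by (intro sum_mono card_shifted_residues_le)
  also have "\<dots> \<le> B * 2 ^ Suc k"
    using mult_le_mono[OF assms(2) less_imp_le[OF less_exp[of "Suc k"]]] by simp
  finally have "real (card ({..<?q} \<inter> ?bad)) \<le> real (B * 2 ^ Suc k)"
    by (simp only: of_nat_le_iff)
  then have card: "real (card ({..<?q} \<inter> ?bad)) \<le> real B * 2 ^ Suc k" by simp
  have "(2::real) ^ Suc k * 2 ^ Suc k = 4 ^ Suc k" by (simp flip: power_mult_distrib)
  also have "\<dots> = real (4 ^ Suc k)" by simp
  also have "\<dots> \<le> real ?q" using pow4_le_modulus[of k] by (simp only: of_nat_le_iff)
  finally have q: "(2::real) ^ Suc k * 2 ^ Suc k \<le> real ?q" .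
  have "measure (factor_measure (Inl k)) ?bad = card ({..<?q} \<inter> ?bad) / ?q"
    by (rule measure_factor_Inl)
  also have "\<dots> \<le> real B * 2 ^ Suc k / ?q"
    using card by (simp add: divide_right_mono)
  also have "\<dots> \<le> real B * 2 ^ Suc k / (2 ^ Suc k * 2 ^ Suc k)"
    using q modulus_pos[of k] by (intro divide_left_mono) auto
  also have "\<dots> = B / 2 ^ Suc k" by simp
  finally show ?thesis .
qed

lemma (in finite_measure) measure_Diff_UN_pos:
  assumes "A \<in> sets M" "\<And>i. C i \<in> sets M" "0 < measure M A"
    and bound: "\<And>i. measure M (A \<inter> C i) \<le> measure M A * c * (1/2) ^ i" and "c < 1/2"
  shows "0 < measure M (A - (\<Union>i. C i))"
proof -
  have summable: "summable (\<lambda>i. measure M A * c * (1/2) ^ i)"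
    by (intro summable_mult summable_geometric) simp
  then have summable_C: "summable (\<lambda>i. measure M (A \<inter> C i))"
    by (rule summable_comparison_test'[where N = 0])
      (simp only: real_norm_def abs_of_nonneg[OF measure_nonneg] bound)
  have "measure M (\<Union>i. A \<inter> C i) \<le> (\<Sum>i. measure M (A \<inter> C i))"
    using assms(1,2) summable_C by (intro finite_measure_subadditive_countably) auto
  also have "\<dots> \<le> (\<Sum>i. measure M A * c * (1/2) ^ i)"
    using summable_C summable bound by (intro suminf_le) auto
  also have "\<dots> = measure M A * c * (\<Sum>i. (1/2::real) ^ i)"
    by (rule suminf_mult) (rule summable_geometric, simp)
  also have "\<dots> < measure M A"
    using suminf_geometric[of "1/2::real"] assms(3,5) by simp
  finally have "measure M (\<Union>i. A \<inter> C i) < measure M A" .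
  moreover have "measure M (A - (\<Union>i. C i)) = measure M (A - (\<Union>i. A \<inter> C i))"
    by (rule arg_cong[where f = "measure M"]) blast
  moreover have "measure M (A - (\<Union>i. A \<inter> C i)) = measure M A - measure M (\<Union>i. A \<inter> C i)"
    using assms(1,2) by (intro finite_measure_Diff) auto
  ultimately show ?thesis by linarith
qed

lemma measure_seed_cylinder_Int:
  assumes "finite J" "i \<notin> J"
  shows "measure seed_measure ({s. \<forall>j\<in>J. s j \<in> A j} \<inter> {s. s i \<in> V})
    = measure (factor_measure i) V * measure seed_measure {s. \<forall>j\<in>J. s j \<in> A j}"
proof -
  have "{s. \<forall>j\<in>J. s j \<in> A j} \<inter> {s. s i \<in> V} = {s. \<forall>j\<in>insert i J. s j \<in> (A(i := V)) j}"
    using assms(2) by auto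
  then have "measure seed_measure ({s. \<forall>j\<in>J. s j \<in> A j} \<inter> {s. s i \<in> V})
      = (\<Prod>j\<in>insert i J. measure (factor_measure j) ((A(i := V)) j))"
    using assms(1) by (simp only: measure_seed_cylinder finite_insert)
  also have "\<dots> = measure (factor_measure i) V * (\<Prod>j\<in>J. measure (factor_measure j) ((A(i := V)) j))"
    using prod.insert[OF assms, of "\<lambda>j. measure (factor_measure j) ((A(i := V)) j)"] by simp
  also have "(\<Prod>j\<in>J. measure (factor_measure j) ((A(i := V)) j))
      = (\<Prod>j\<in>J. measure (factor_measure j) (A j))"
    using assms(2) by (intro prod.cong) auto
  finally show ?thesis using measure_seed_cylinder[OF assms(1)] by simp
qed

lemma realize_prefix_eq:
  assumes \<alpha>\<xi>: "admissible \<alpha> \<xi>"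
    and odometer: "\<And>k. k < B \<Longrightarrow> s (Inl k) = \<alpha> k"
    and bits: "\<And>t. t < B \<Longrightarrow> s (Inr t) = of_bool (\<xi> t)"
    and tail: "\<And>k t. B \<le> k \<Longrightarrow> t < B \<Longrightarrow> \<xi> t \<Longrightarrow> k < (s (Inl k) mod modulus k + t) mod modulus k"
  shows "\<forall>i<B. realize s i = encode \<alpha> \<xi> i"
proof -
  have seed_odometer: "seed_odometer s k = \<alpha> k" if "k < B" for k
    using odometer[OF that] admissible_less[OF \<alpha>\<xi>, of k] by (simp add: seed_odometer_def)
  have "seed_bits s t = \<xi> t" if "t < B" for t
  proof -
    have "k < rot t (seed_odometer s) k" if "\<xi> t" for k
    proof (cases "k < B")
      case True
      then show ?thesis
        using admissible_free_time[OF \<alpha>\<xi> \<open>\<xi> t\<close>] seed_odometer by (simp add: free_time_def rot_def)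
    next
      case False
      then show ?thesis
        using tail[of k t] \<open>t < B\<close> \<open>\<xi> t\<close> by (simp add: rot_def seed_odometer_def)
    qed
    then show ?thesis using bits[OF that] by (auto simp: seed_bits_def free_time_def)
  qed
  then show ?thesis
    unfolding realize_def using seed_odometer by (intro encode_prefix_eq) auto
qed

definition prefix_cylinder :: "nat \<Rightarrow> (nat \<Rightarrow> nat) \<Rightarrow> (nat \<Rightarrow> bool) \<Rightarrow> (nat + nat \<Rightarrow> nat) set" where
  "prefix_cylinder B \<alpha> \<xi> = {s. \<forall>j\<in>Inl ` {..<B} \<union> Inr ` {..<B}.
     s j \<in> (case j of Inl k \<Rightarrow> {\<alpha> k} | Inr t \<Rightarrow> {of_bool (\<xi> t)})}"

lemma prefix_cylinderD:
  assumes "s \<in> prefix_cylinder B \<alpha> \<xi>" "k < B"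
  shows "s (Inl k) = \<alpha> k" and "s (Inr k) = of_bool (\<xi> k)"
proof -
  have "s j \<in> (case j of Inl k \<Rightarrow> {\<alpha> k} | Inr t \<Rightarrow> {of_bool (\<xi> t)})"
    if "j \<in> Inl ` {..<B} \<union> Inr ` {..<B}" for j
    using assms(1) that unfolding prefix_cylinder_def by blast
  from this[of "Inl k"] this[of "Inr k"] assms(2)
  show "s (Inl k) = \<alpha> k" "s (Inr k) = of_bool (\<xi> k)" by auto
qed

lemma sets_prefix_cylinder: "prefix_cylinder B \<alpha> \<xi> \<in> sets seed_measure"
proof -
  have "{s \<in> space seed_measure. \<forall>j\<in>Inl ` {..<B} \<union> Inr ` {..<B}.
      s j \<in> (case j of Inl k \<Rightarrow> {\<alpha> k} | Inr t \<Rightarrow> {of_bool (\<xi> t)})} \<in> sets seed_measure"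
    using sets_seed_coordinate by (intro sets.sets_Collect_finite_All) simp_all
  then show ?thesis by (simp add: prefix_cylinder_def)
qed

lemma measure_prefix_cylinder_pos:
  assumes "\<And>k. k < B \<Longrightarrow> \<alpha> k < modulus k"
  shows "0 < measure seed_measure (prefix_cylinder B \<alpha> \<xi>)"
  unfolding prefix_cylinder_def
    measure_seed_cylinder[OF finite_UnI[OF finite_imageI finite_imageI], OF finite_lessThan finite_lessThan]
proof (rule prod_pos)
  fix j assume "j \<in> Inl ` {..<B} \<union> Inr ` {..<B}"
  then show "0 < measure (factor_measure j) (case j of Inl k \<Rightarrow> {\<alpha> k} | Inr t \<Rightarrow> {of_bool (\<xi> t)})"
    using assms modulus_pos by (cases j) (auto simp: measure_factor_Inl measure_factor_Inr)
qed

lemma measure_prefix_cylinder_Int_bad: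
  assumes "finite Ts" "card Ts \<le> B" "B \<le> k"
  shows "measure seed_measure (prefix_cylinder B \<alpha> \<xi> \<inter>
      {s. s (Inl k) \<in> {v. \<exists>t\<in>Ts. (v mod modulus k + t) mod modulus k \<le> k}})
    \<le> B / 2 ^ Suc k * measure seed_measure (prefix_cylinder B \<alpha> \<xi>)"
proof -
  have "Inl k \<notin> Inl ` {..<B} \<union> Inr ` {..<B}" using assms(3) by auto
  then have "measure seed_measure (prefix_cylinder B \<alpha> \<xi> \<inter>
      {s. s (Inl k) \<in> {v. \<exists>t\<in>Ts. (v mod modulus k + t) mod modulus k \<le> k}})
    = measure (factor_measure (Inl k)) {v. \<exists>t\<in>Ts. (v mod modulus k + t) mod modulus k \<le> k}
      * measure seed_measure (prefix_cylinder B \<alpha> \<xi>)"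
    unfolding prefix_cylinder_def by (intro measure_seed_cylinder_Int) auto
  also have "\<dots> \<le> B / 2 ^ Suc k * measure seed_measure (prefix_cylinder B \<alpha> \<xi>)"
    by (rule mult_right_mono[OF measure_factor_bad_residues[OF assms(1,2)] measure_nonneg])
  finally show ?thesis .
qed

lemma exists_seed_event_realizing_prefix:
  assumes \<alpha>\<xi>: "admissible \<alpha> \<xi>"
  obtains E where "E \<in> sets seed_measure" "0 < measure seed_measure E"
    "\<And>s. s \<in> E \<Longrightarrow> \<forall>i<B. realize s i = encode \<alpha> \<xi> i"
proof -
  define Ts where "Ts = {t. t < B \<and> \<xi> t}"
  define C where "C i = {s :: nat + nat \<Rightarrow> nat.
      s (Inl (B + i)) \<in> {v. \<exists>t\<in>Ts. (v mod modulus (B + i) + t) mod modulus (B + i) \<le> B + i}}" for i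
  let ?cyl = "prefix_cylinder B \<alpha> \<xi>"
  have sets_C: "C i \<in> sets seed_measure" for i
    unfolding C_def by (rule sets_seed_coordinate)
  have "card Ts \<le> card {..<B}" unfolding Ts_def by (intro card_mono) auto
  then have "card Ts \<le> B" by simp
  then have bound:
    "measure seed_measure (?cyl \<inter> C i) \<le> measure seed_measure ?cyl * (B / 2 ^ Suc B) * (1/2) ^ i" for i
  proof -
    have "measure seed_measure (?cyl \<inter> C i) \<le> B / 2 ^ Suc (B + i) * measure seed_measure ?cyl"
      unfolding C_def using \<open>card Ts \<le> B\<close>
      by (intro measure_prefix_cylinder_Int_bad) (auto simp: Ts_def)
    also have "\<dots> = measure seed_measure ?cyl * (B / 2 ^ Suc B) * (1/2) ^ i"
      by (simp add: power_add field_simps)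
    finally show ?thesis .
  qed
  have c: "real B / 2 ^ Suc B < 1/2" using less_exp[of B] by (simp add: field_simps)
  have pos: "0 < measure seed_measure ?cyl"
    by (rule measure_prefix_cylinder_pos[OF admissible_less[OF \<alpha>\<xi>]])
  have "0 < measure seed_measure (?cyl - (\<Union>i. C i))"
    by (rule seed.measure_Diff_UN_pos[where C = C, OF sets_prefix_cylinder sets_C pos bound c])
  moreover have "?cyl - (\<Union>i. C i) \<in> sets seed_measure" using sets_prefix_cylinder sets_C by auto
  moreover have "\<forall>i<B. realize s i = encode \<alpha> \<xi> i" if s: "s \<in> ?cyl - (\<Union>i. C i)" for s
  proof (rule realize_prefix_eq[OF \<alpha>\<xi>])
    have "s \<in> ?cyl" using s by blast
    then show "s (Inl k) = \<alpha> k" "s (Inr k) = of_bool (\<xi> k)" if "k < B" for k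
      using prefix_cylinderD that by simp_all
    show "k < (s (Inl k) mod modulus k + t) mod modulus k" if "B \<le> k" "t < B" "\<xi> t" for k t
    proof -
      have "s \<notin> C (k - B)" using s by blast
      then have "\<not> (\<exists>t\<in>Ts. (s (Inl k) mod modulus k + t) mod modulus k \<le> k)"
        unfolding C_def using that(1) by simp
      then show ?thesis using that(2,3) by (auto simp: Ts_def not_le)
    qed
  qed
  ultimately show thesis using that by blast
qed

lemma openin_Xsys_sets: "openin (top_of_set Xsys) U \<Longrightarrow> U \<in> sets (restrict_space borel Xsys)"
  using compact_imp_closed[OF compact_Xsys]
  by (auto simp: openin_open sets_restrict_space_iff)

lemma inv_measure_full_support:
  assumes U: "opene Xsys U"
  shows "0 < emeasure inv_measure U"
proof -
  have oU: "openin (top_of_set Xsys) U" using U opene_def by blast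
  obtain \<alpha> \<xi> B where \<alpha>\<xi>: "admissible \<alpha> \<xi>"
    and B: "\<And>p. p \<in> Xsys \<Longrightarrow> \<forall>i<B. p i = encode \<alpha> \<xi> i \<Longrightarrow> p \<in> U"
    using opene_Xsys_prefix_nbhd[OF U] by blast
  obtain E where E: "E \<in> sets seed_measure" "0 < measure seed_measure E"
    "\<And>s. s \<in> E \<Longrightarrow> \<forall>i<B. realize s i = encode \<alpha> \<xi> i"
    using exists_seed_event_realizing_prefix[OF \<alpha>\<xi>] by metis
  have "E \<subseteq> realize -` U \<inter> space seed_measure"
    using B E(3) realize_in_Xsys by auto
  then have "emeasure seed_measure E \<le> emeasure seed_measure (realize -` U \<inter> space seed_measure)"
    by (rule emeasure_mono) (rule measurable_sets[OF measurable_realize openin_Xsys_sets[OF oU]])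
  also have "\<dots> = emeasure inv_measure U"
    unfolding inv_measure_def
    by (rule emeasure_distr[symmetric, OF measurable_realize openin_Xsys_sets[OF oU]])
  finally show ?thesis
    using E(2) seed.emeasure_eq_measure by (metis ennreal_less_zero_iff order.strict_trans2)
qed

lemma has_full_invariant_measure_Xsys: "has_full_invariant_measure Xsys Tsys"
  unfolding has_full_invariant_measure_def
proof (intro exI[of _ inv_measure] conjI ballI allI impI)
  show "prob_space inv_measure"
    unfolding inv_measure_def by (rule seed.prob_space_distr[OF measurable_realize])
  show "sets inv_measure = sets (restrict_space borel Xsys)" unfolding inv_measure_def by simp
  show "space inv_measure = Xsys" unfolding inv_measure_def by (simp add: space_restrict_space)
qed (simp_all add: inv_measure_invariant inv_measure_full_support)

theorem mainTheorem6:
  shows "\<exists>(X :: (nat \<Rightarrow> real) set) T.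
           tds X T \<and> E_system X T \<and> \<not> minimal X T
         \<and> sensitive X T \<and> \<not> thickly_sensitive X T
         \<and> Tran X T \<subset> Eq_syn X T \<and> Eq_syn X T = X"
proof (intro exI[of _ Xsys] exI[of _ Tsys] conjI)
  have "encode (\<lambda>_. 0) (\<lambda>_. False) \<in> Xsys" by (rule encode_in_Xsys[OF admissible_zero])
  then show "tds Xsys Tsys" "\<not> thickly_sensitive Xsys Tsys"
    unfolding tds_def
    using compact_Xsys continuous_on_Tsys Tsys_image_Xsys not_thickly_sensitive_if_Eq_syn
      Eq_syn_Xsys by blast+
  show "E_system Xsys Tsys"
    unfolding E_system_def using transitive_Xsys has_full_invariant_measure_Xsys by blast
  show "\<not> minimal Xsys Tsys" by (rule not_minimal_Xsys)
  show "sensitive Xsys Tsys" by (rule sensitive_Xsys)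
  show "Tran Xsys Tsys \<subset> Eq_syn Xsys Tsys" by (rule Tran_psubset_Eq_syn_Xsys)
  show "Eq_syn Xsys Tsys = Xsys" by (rule Eq_syn_Xsys)
qed

end
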